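(* Let $S=\{R_0,\dots,R_d\}$ be a scheme on $X$, $\mathbb F$ a field, $x\in X$, $\mathcal T=\mathcal T(x)$, $E_a^*=E_a^*(x)$, and let $\mathrm{Rad}(\mathcal T)$ be the Jacobson radical of $\mathcal T$. Suppose that $E_a^*ME_b^*=O$ for all $M\in\mathrm{Rad}(\mathcal T)$ and all distinct $R_a,R_b\in S$. Then $\mathcal T$ is semisimple if and only if the $\mathbb F$-algebra $E_c^*\mathcal TE_c^*=\{E_c^*ME_c^*:M\in\mathcal T\}$ (with identity $E_c^*$) is semisimple for every $R_c\in S$.
   Context: Let $X$ be a nonempty finite set. A scheme of class $d$ on $X$ is a partition $S=\{R_0,\dots,R_d\}$ of $X\times X$ into nonempty sets such that $R_0=\{(b,b):b\in X\}$; for each $c$ there is $c'$ with $R_{c'}=\{(f,e):(e,f)\in R_c\}$; and for all $i,j,k$ the intersection number $p_{ij}^k=|\{\ell\in X:(m,\ell)\in R_i,(\ell,n)\in R_j\}|$ does not depend on $(m,n)\in R_k$. For $y\in X$, $yR_a=\{z:(y,z)\in R_a\}$. $A_a\in M_X(\mathbb F)$ is the $(0,1)$ adjacency matrix of $R_a$ and $E_a^*(y)$ is the diagonal $(0,1)$-matrix with ones exactly at positions indexed by $yR_a$. The Terwilliger $\mathbb F$-algebra $\mathcal T(y)$ is the $\mathbb F$-subalgebra of $M_X(\mathbb F)$ generated by $A_0,\dots,A_d,E_0^*(y),\dots,E_d^*(y)$. $O$ is the zero matrix. *)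

theory Defs
  imports Main
begin

text \<open>Square matrices indexed by the finite set X (modelled as a finite type 'x)
  with entries in a field 'f.\<close>
type_synonym ('x, 'f) sqm = "'x \<Rightarrow> 'x \<Rightarrow> 'f"

definition mmul :: "('x::finite, 'f::field) sqm \<Rightarrow> ('x, 'f) sqm \<Rightarrow> ('x, 'f) sqm" where
  "mmul A B = (\<lambda>i j. \<Sum>k\<in>UNIV. A i k * B k j)"

definition madd :: "('x, 'f::field) sqm \<Rightarrow> ('x, 'f) sqm \<Rightarrow> ('x, 'f) sqm" where
  "madd A B = (\<lambda>i j. A i j + B i j)"

definition msmult :: "'f::field \<Rightarrow> ('x, 'f) sqm \<Rightarrow> ('x, 'f) sqm" where
  "msmult c A = (\<lambda>i j. c * A i j)"

definition mzero :: "('x, 'f::field) sqm" where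
  "mzero = (\<lambda>i j. 0)"

definition mone :: "('x, 'f::field) sqm" where
  "mone = (\<lambda>i j. if i = j then 1 else 0)"

definition is_scheme :: "nat \<Rightarrow> (nat \<Rightarrow> ('x::finite \<times> 'x) set) \<Rightarrow> bool" where
  "is_scheme d R \<longleftrightarrow>
     (\<forall>a\<le>d. R a \<noteq> {}) \<and>
     (\<forall>a\<le>d. \<forall>b\<le>d. a \<noteq> b \<longrightarrow> R a \<inter> R b = {}) \<and>
     (\<Union>a\<in>{..d}. R a) = UNIV \<and>
     R 0 = {(b, b) | b. True} \<and>
     (\<forall>c\<le>d. \<exists>c'\<le>d. R c' = {(f, e). (e, f) \<in> R c}) \<and>
     (\<forall>i\<le>d. \<forall>j\<le>d. \<forall>k\<le>d. \<exists>p::nat. \<forall>m n. (m, n) \<in> R k \<longrightarrow>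
         card {l. (m, l) \<in> R i \<and> (l, n) \<in> R j} = p)"

definition adj :: "(nat \<Rightarrow> ('x \<times> 'x) set) \<Rightarrow> nat \<Rightarrow> ('x, 'f::field) sqm" where
  "adj R a = (\<lambda>y z. if (y, z) \<in> R a then 1 else 0)"

definition Estar :: "(nat \<Rightarrow> ('x \<times> 'x) set) \<Rightarrow> 'x \<Rightarrow> nat \<Rightarrow> ('x, 'f::field) sqm" where
  "Estar R y a = (\<lambda>u v. if u = v \<and> (y, u) \<in> R a then 1 else 0)"

inductive_set alg_gen :: "('x::finite, 'f::field) sqm set \<Rightarrow> ('x, 'f) sqm set"
  for G :: "('x, 'f) sqm set" where
  gen: "M \<in> G \<Longrightarrow> M \<in> alg_gen G"
| one: "mone \<in> alg_gen G"
| add: "M \<in> alg_gen G \<Longrightarrow> N \<in> alg_gen G \<Longrightarrow> madd M N \<in> alg_gen G"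
| smult: "M \<in> alg_gen G \<Longrightarrow> msmult c M \<in> alg_gen G"
| mul: "M \<in> alg_gen G \<Longrightarrow> N \<in> alg_gen G \<Longrightarrow> mmul M N \<in> alg_gen G"

definition terwilliger :: "nat \<Rightarrow> (nat \<Rightarrow> ('x::finite \<times> 'x) set) \<Rightarrow> 'x \<Rightarrow> ('x, 'f::field) sqm set" where
  "terwilliger d R y = alg_gen ({adj R a | a. a \<le> d} \<union> {Estar R y a | a. a \<le> d})"

definition corner :: "('x::finite, 'f::field) sqm \<Rightarrow> ('x, 'f) sqm set \<Rightarrow> ('x, 'f) sqm set" where
  "corner E T = {mmul (mmul E M) E | M. M \<in> T}"

definition left_ideal :: "('x::finite, 'f::field) sqm set \<Rightarrow> ('x, 'f) sqm set \<Rightarrow> bool" where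
  "left_ideal A L \<longleftrightarrow> L \<subseteq> A \<and> mzero \<in> L \<and>
     (\<forall>M\<in>L. \<forall>N\<in>L. madd M N \<in> L) \<and>
     (\<forall>c. \<forall>M\<in>L. msmult c M \<in> L) \<and>
     (\<forall>N\<in>A. \<forall>M\<in>L. mmul N M \<in> L)"

definition maximal_left_ideal :: "('x::finite, 'f::field) sqm set \<Rightarrow> ('x, 'f) sqm set \<Rightarrow> bool" where
  "maximal_left_ideal A L \<longleftrightarrow> left_ideal A L \<and> L \<noteq> A \<and>
     (\<forall>L'. left_ideal A L' \<and> L \<subseteq> L' \<and> L' \<noteq> A \<longrightarrow> L' = L)"

definition jacobson_rad :: "('x::finite, 'f::field) sqm set \<Rightarrow> ('x, 'f) sqm set" where
  "jacobson_rad A = A \<inter> \<Inter>{L. maximal_left_ideal A L}"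

text \<open>A finite-dimensional algebra is semisimple iff its Jacobson radical is zero.\<close>
definition semisimple :: "('x::finite, 'f::field) sqm set \<Rightarrow> bool" where
  "semisimple A \<longleftrightarrow> jacobson_rad A = {mzero}"

end

theory Submission
  imports Defs
begin

text \<open>The proof rests on the elementwise description of the Jacobson radical of a unital
  algebra: \<open>a \<in> Rad A\<close> iff \<open>1 - b a\<close> is left invertible for every \<open>b \<in> A\<close>. With it one checks,
  for an idempotent \<open>e\<close>, that \<open>Rad (e A e) \<subseteq> Rad A\<close> and \<open>e Rad(A) e \<subseteq> Rad (e A e)\<close>.
  The first inclusion shows that semisimplicity passes from \<open>\<T>\<close> to every corner
  \<open>E\<^sub>c\<^sup>* \<T> E\<^sub>c\<^sup>*\<close>. Conversely, a radical element \<open>M\<close> of \<open>\<T>\<close> is the sum of its blocks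
  \<open>E\<^sub>a\<^sup>* M E\<^sub>b\<^sup>*\<close>; the off-diagonal blocks vanish by hypothesis and the diagonal ones lie in the
  radicals of the semisimple corners, so \<open>M = O\<close>.\<close>

section \<open>Matrix arithmetic\<close>

lemma madd_apply [simp]: "madd M N i j = M i j + N i j"
  by (simp add: madd_def)

lemma msmult_apply [simp]: "msmult c M i j = c * M i j"
  by (simp add: msmult_def)

lemma mzero_apply [simp]: "mzero i j = 0"
  by (simp add: mzero_def)

lemma mmul_assoc: "mmul (mmul A B) C = mmul A (mmul B C)"
proof (intro ext)
  fix i j
  have "mmul (mmul A B) C i j = (\<Sum>k\<in>UNIV. \<Sum>l\<in>UNIV. A i l * B l k * C k j)"
    by (simp add: mmul_def sum_distrib_right)
  also have "\<dots> = (\<Sum>l\<in>UNIV. \<Sum>k\<in>UNIV. A i l * B l k * C k j)"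
    by (rule sum.swap)
  also have "\<dots> = mmul A (mmul B C) i j"
    by (simp add: mmul_def sum_distrib_left mult.assoc)
  finally show "mmul (mmul A B) C i j = mmul A (mmul B C) i j" .
qed

lemma mmul_madd_left: "mmul (madd A B) C = madd (mmul A C) (mmul B C)"
  by (simp add: mmul_def madd_def distrib_right sum.distrib)

lemma mmul_madd_right: "mmul C (madd A B) = madd (mmul C A) (mmul C B)"
  by (simp add: mmul_def madd_def distrib_left sum.distrib)

lemma mmul_msmult_left: "mmul (msmult c A) B = msmult c (mmul A B)"
  by (simp add: mmul_def msmult_def sum_distrib_left mult.assoc)

lemma mmul_msmult_right: "mmul A (msmult c B) = msmult c (mmul A B)"
  by (simp add: mmul_def msmult_def sum_distrib_left mult.left_commute)

lemma mmul_mzero_left [simp]: "mmul mzero A = mzero"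
  by (simp add: mmul_def mzero_def)

lemmas mmul_simps = mmul_assoc mmul_madd_left mmul_madd_right mmul_msmult_left mmul_msmult_right

lemma mmul_diag_left: "mmul (\<lambda>u v. if u = v then f u else 0) M = (\<lambda>i j. f i * M i j)"
proof (intro ext)
  fix i j
  have "mmul (\<lambda>u v. if u = v then f u else 0) M i j = (\<Sum>k\<in>UNIV. if k = i then f i * M i j else 0)"
    unfolding mmul_def by (intro sum.cong) auto
  then show "mmul (\<lambda>u v. if u = v then f u else 0) M i j = f i * M i j"
    by simp
qed

lemma mmul_diag_right: "mmul M (\<lambda>u v. if u = v then f u else 0) = (\<lambda>i j. M i j * f j)"
proof (intro ext)
  fix i j
  have "mmul M (\<lambda>u v. if u = v then f u else 0) i j = (\<Sum>k\<in>UNIV. if k = j then M i j * f j else 0)"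
    unfolding mmul_def by (intro sum.cong) auto
  then show "mmul M (\<lambda>u v. if u = v then f u else 0) i j = M i j * f j"
    by simp
qed

lemma mmul_mone_left [simp]: "mmul mone A = A"
  unfolding mone_def mmul_diag_left by simp

lemma mmul_mone_right [simp]: "mmul A mone = A"
  unfolding mone_def mmul_diag_right by simp

abbreviation mdiff :: "('x, 'f::field) sqm \<Rightarrow> ('x, 'f) sqm \<Rightarrow> ('x, 'f) sqm" where
  "mdiff M N \<equiv> madd M (msmult (-1) N)"

section \<open>Left ideals and the Jacobson radical\<close>

lemma left_idealD:
  assumes "left_ideal A L"
  shows left_ideal_subset: "L \<subseteq> A"
    and left_ideal_mzero: "mzero \<in> L"
    and left_ideal_madd: "M \<in> L \<Longrightarrow> N \<in> L \<Longrightarrow> madd M N \<in> L"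
    and left_ideal_msmult: "M \<in> L \<Longrightarrow> msmult c M \<in> L"
    and left_ideal_mmul: "N \<in> A \<Longrightarrow> M \<in> L \<Longrightarrow> mmul N M \<in> L"
  using assms unfolding left_ideal_def by blast+

lemma maximal_left_idealD:
  assumes "maximal_left_ideal A L"
  shows "left_ideal A L" and "L \<noteq> A"
    and "left_ideal A L' \<Longrightarrow> L \<subseteq> L' \<Longrightarrow> L' \<noteq> A \<Longrightarrow> L' = L"
  using assms unfolding maximal_left_ideal_def by blast+

definition left_quasi_regular :: "('x::finite, 'f::field) sqm set \<Rightarrow> ('x, 'f) sqm \<Rightarrow> ('x, 'f) sqm \<Rightarrow> bool" where
  "left_quasi_regular A u y \<longleftrightarrow> (\<exists>c\<in>A. mmul c (mdiff u y) = u)"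

definition quasi_regular_radical :: "('x::finite, 'f::field) sqm set \<Rightarrow> ('x, 'f) sqm \<Rightarrow> ('x, 'f) sqm set" where
  "quasi_regular_radical A u = {a \<in> A. \<forall>b\<in>A. left_quasi_regular A u (mmul b a)}"

text \<open>The unit \<open>u\<close> is kept abstract because a corner \<open>e A e\<close> has unit \<open>e\<close>, not \<open>mone\<close>.\<close>

locale matrix_algebra =
  fixes A :: "('x::finite, 'f::field) sqm set" and u :: "('x, 'f) sqm"
  assumes unit_mem: "u \<in> A"
    and madd_closed: "M \<in> A \<Longrightarrow> N \<in> A \<Longrightarrow> madd M N \<in> A"
    and msmult_closed: "M \<in> A \<Longrightarrow> msmult c M \<in> A"
    and mmul_closed: "M \<in> A \<Longrightarrow> N \<in> A \<Longrightarrow> mmul M N \<in> A"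
    and unit_left: "M \<in> A \<Longrightarrow> mmul u M = M"
    and unit_right: "M \<in> A \<Longrightarrow> mmul M u = M"
begin

lemma mzero_mem: "mzero \<in> A"
proof -
  have "msmult 0 u = mzero"
    by (simp add: fun_eq_iff)
  then show ?thesis
    using msmult_closed[OF unit_mem, of 0] by simp
qed

lemma mdiff_closed: "M \<in> A \<Longrightarrow> N \<in> A \<Longrightarrow> mdiff M N \<in> A"
  by (simp add: madd_closed msmult_closed)

lemma left_ideal_eq_if_unit_mem:
  assumes "left_ideal A L" and "u \<in> L"
  shows "L = A"
  using assms left_ideal_mmul[OF assms(1) _ assms(2)] unit_right left_ideal_subset
  by fastforce

lemma unit_not_mem_maximal_left_ideal: "maximal_left_ideal A L \<Longrightarrow> u \<notin> L"
  using left_ideal_eq_if_unit_mem maximal_left_idealD by blast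

lemma left_ideal_principal:
  assumes "y \<in> A"
  shows "left_ideal A {mmul c y | c. c \<in> A}"
  unfolding left_ideal_def
proof (intro conjI ballI allI)
  show "{mmul c y | c. c \<in> A} \<subseteq> A"
    using assms mmul_closed by blast
  have "mzero = mmul mzero y"
    by simp
  then show "mzero \<in> {mmul c y | c. c \<in> A}"
    using mzero_mem by blast
next
  fix M N assume "M \<in> {mmul c y | c. c \<in> A}" "N \<in> {mmul c y | c. c \<in> A}"
  then show "madd M N \<in> {mmul c y | c. c \<in> A}"
    by (auto simp: mmul_madd_left[symmetric] intro: madd_closed)
next
  fix k M assume "M \<in> {mmul c y | c. c \<in> A}"
  then show "msmult k M \<in> {mmul c y | c. c \<in> A}"
    by (auto simp: mmul_msmult_left[symmetric] intro: msmult_closed)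
next
  fix N M assume "N \<in> A" "M \<in> {mmul c y | c. c \<in> A}"
  then show "mmul N M \<in> {mmul c y | c. c \<in> A}"
    by (auto simp: mmul_assoc[symmetric] intro: mmul_closed)
qed

lemma left_ideal_extend:
  assumes L: "left_ideal A L" and "a \<in> A"
  shows "left_ideal A {madd l (mmul b a) | l b. l \<in> L \<and> b \<in> A}" (is "left_ideal A ?L")
  unfolding left_ideal_def
proof (intro conjI ballI allI)
  show "?L \<subseteq> A"
    using left_ideal_subset[OF L] \<open>a \<in> A\<close> by (auto intro: madd_closed mmul_closed)
  have "mzero = madd mzero (mmul mzero a)"
    by (simp add: fun_eq_iff)
  then show "mzero \<in> ?L"
    using left_ideal_mzero[OF L] mzero_mem by blast
next
  fix M N assume "M \<in> ?L" "N \<in> ?L"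
  then obtain l1 b1 l2 b2 where "l1 \<in> L" "b1 \<in> A" "l2 \<in> L" "b2 \<in> A"
    and "M = madd l1 (mmul b1 a)" "N = madd l2 (mmul b2 a)" by blast
  moreover have "madd (madd l1 (mmul b1 a)) (madd l2 (mmul b2 a))
      = madd (madd l1 l2) (mmul (madd b1 b2) a)"
    by (simp add: mmul_madd_left fun_eq_iff algebra_simps)
  ultimately show "madd M N \<in> ?L"
    using left_ideal_madd[OF L] madd_closed by blast
next
  fix k M assume "M \<in> ?L"
  then obtain l b where "l \<in> L" "b \<in> A" "M = madd l (mmul b a)" by blast
  moreover have "msmult k (madd l (mmul b a)) = madd (msmult k l) (mmul (msmult k b) a)"
    by (simp add: mmul_msmult_left fun_eq_iff algebra_simps)
  ultimately show "msmult k M \<in> ?L"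
    using left_ideal_msmult[OF L] msmult_closed by blast
next
  fix N M assume "N \<in> A" "M \<in> ?L"
  then obtain l b where "l \<in> L" "b \<in> A" "M = madd l (mmul b a)" by blast
  moreover have "mmul N (madd l (mmul b a)) = madd (mmul N l) (mmul (mmul N b) a)"
    by (simp add: mmul_madd_right mmul_assoc)
  ultimately show "mmul N M \<in> ?L"
    using left_ideal_mmul[OF L] mmul_closed \<open>N \<in> A\<close> by blast
qed

lemma left_ideal_Union_chain:
  assumes "C \<noteq> {}" and ideals: "\<And>L. L \<in> C \<Longrightarrow> left_ideal A L"
    and chain: "\<And>X Y. X \<in> C \<Longrightarrow> Y \<in> C \<Longrightarrow> X \<subseteq> Y \<or> Y \<subseteq> X"
  shows "left_ideal A (\<Union>C)"
  unfolding left_ideal_def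
proof (intro conjI ballI allI)
  show "\<Union>C \<subseteq> A"
    using left_ideal_subset[OF ideals] by blast
  show "mzero \<in> \<Union>C"
    using left_ideal_mzero[OF ideals] \<open>C \<noteq> {}\<close> by blast
next
  fix M N assume "M \<in> \<Union>C" "N \<in> \<Union>C"
  then obtain X Y where "X \<in> C" "M \<in> X" "Y \<in> C" "N \<in> Y" by blast
  then have "M \<in> X \<union> Y" "N \<in> X \<union> Y" and "X \<union> Y \<in> C"
    using chain[of X Y] by (auto simp: sup_absorb1 sup_absorb2)
  then show "madd M N \<in> \<Union>C"
    using left_ideal_madd[OF ideals] by blast
next
  fix c M assume "M \<in> \<Union>C"
  then show "msmult c M \<in> \<Union>C"
    using left_ideal_msmult[OF ideals] by blast
next
  fix N M assume "N \<in> A" "M \<in> \<Union>C"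
  then show "mmul N M \<in> \<Union>C"
    using left_ideal_mmul[OF ideals] by blast
qed

lemma maximal_left_ideal_superset:
  assumes "left_ideal A I" and "u \<notin> I"
  obtains L where "maximal_left_ideal A L" and "I \<subseteq> L"
proof -
  let ?F = "{L. left_ideal A L \<and> u \<notin> L \<and> I \<subseteq> L}"
  have "\<exists>M\<in>?F. \<forall>X\<in>?F. M \<subseteq> X \<longrightarrow> X = M"
  proof (rule subset_Zorn_nonempty)
    show "?F \<noteq> {}"
      using assms by blast
  next
    fix C assume "C \<noteq> {}" and "subset.chain ?F C"
    then show "\<Union>C \<in> ?F"
      using left_ideal_Union_chain[of C] by (auto simp: subset_chain_def)
  qed
  then obtain M where "M \<in> ?F" and M_max: "\<forall>X\<in>?F. M \<subseteq> X \<longrightarrow> X = M"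
    by blast
  moreover have "maximal_left_ideal A M"
    unfolding maximal_left_ideal_def
  proof (intro conjI allI impI)
    show "left_ideal A M" "M \<noteq> A"
      using \<open>M \<in> ?F\<close> unit_mem by auto
    fix L assume "left_ideal A L \<and> M \<subseteq> L \<and> L \<noteq> A"
    then show "L = M"
      using M_max \<open>M \<in> ?F\<close> left_ideal_eq_if_unit_mem by blast
  qed
  ultimately show thesis
    using that by blast
qed

lemma jacobson_rad_subset_quasi_regular_radical: "jacobson_rad A \<subseteq> quasi_regular_radical A u"
proof
  fix a assume "a \<in> jacobson_rad A"
  then have "a \<in> A" and a_max: "\<And>L. maximal_left_ideal A L \<Longrightarrow> a \<in> L"
    unfolding jacobson_rad_def by auto
  have "left_quasi_regular A u (mmul b a)" if "b \<in> A" for b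
  proof (rule ccontr)
    let ?y = "mdiff u (mmul b a)"
    let ?I = "{mmul c ?y | c. c \<in> A}"
    assume "\<not> left_quasi_regular A u (mmul b a)"
    then have "u \<notin> ?I"
      unfolding left_quasi_regular_def by force
    moreover have y_mem: "?y \<in> A"
      using unit_mem \<open>a \<in> A\<close> \<open>b \<in> A\<close> by (intro mdiff_closed mmul_closed)
    ultimately obtain L where L: "maximal_left_ideal A L" and "?I \<subseteq> L"
      using maximal_left_ideal_superset[OF left_ideal_principal] by blast
    have "?y \<in> L"
      using \<open>?I \<subseteq> L\<close> unit_mem unit_left[OF y_mem] by force
    moreover have "mmul b a \<in> L"
      using left_ideal_mmul[OF maximal_left_idealD(1)[OF L] \<open>b \<in> A\<close> a_max[OF L]] .
    ultimately have "madd ?y (mmul b a) \<in> L"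
      using left_ideal_madd[OF maximal_left_idealD(1)[OF L]] by blast
    moreover have "madd ?y (mmul b a) = u"
      by (simp add: fun_eq_iff)
    ultimately show False
      using unit_not_mem_maximal_left_ideal[OF L] by simp
  qed
  then show "a \<in> quasi_regular_radical A u"
    unfolding quasi_regular_radical_def using \<open>a \<in> A\<close> by blast
qed

lemma quasi_regular_radical_subset_jacobson_rad: "quasi_regular_radical A u \<subseteq> jacobson_rad A"
proof
  fix a assume "a \<in> quasi_regular_radical A u"
  then have "a \<in> A" and a_qr: "\<And>b. b \<in> A \<Longrightarrow> left_quasi_regular A u (mmul b a)"
    unfolding quasi_regular_radical_def by auto
  have "a \<in> L" if L: "maximal_left_ideal A L" for L
  proof (rule ccontr)
    let ?L = "{madd l (mmul b a) | l b. l \<in> L \<and> b \<in> A}"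
    assume "a \<notin> L"
    have L_ideal: "left_ideal A L"
      using maximal_left_idealD(1)[OF L] .
    have "L \<subseteq> ?L"
    proof
      fix l assume "l \<in> L"
      moreover have "l = madd l (mmul mzero a)"
        by (simp add: fun_eq_iff)
      ultimately show "l \<in> ?L"
        using mzero_mem by blast
    qed
    moreover have "a = madd mzero (mmul u a)"
      using unit_left[OF \<open>a \<in> A\<close>] by (simp add: fun_eq_iff)
    then have "a \<in> ?L"
      using left_ideal_mzero[OF L_ideal] unit_mem by blast
    ultimately have "?L = A"
      using maximal_left_idealD(3)[OF L left_ideal_extend[OF L_ideal \<open>a \<in> A\<close>]] \<open>a \<notin> L\<close>
      by blast
    then obtain l b where "l \<in> L" "b \<in> A" and u_eq: "u = madd l (mmul b a)"
      using unit_mem by blast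
    moreover obtain c where "c \<in> A" "mmul c (mdiff u (mmul b a)) = u"
      using a_qr[OF \<open>b \<in> A\<close>] unfolding left_quasi_regular_def by blast
    moreover have "mdiff u (mmul b a) = l"
      using u_eq by (simp add: fun_eq_iff)
    ultimately have "u \<in> L"
      using left_ideal_mmul[OF L_ideal] by metis
    then show False
      using unit_not_mem_maximal_left_ideal[OF L] by blast
  qed
  then show "a \<in> jacobson_rad A"
    unfolding jacobson_rad_def using \<open>a \<in> A\<close> by blast
qed

theorem jacobson_rad_eq_quasi_regular_radical: "jacobson_rad A = quasi_regular_radical A u"
  using jacobson_rad_subset_quasi_regular_radical quasi_regular_radical_subset_jacobson_rad
  by blast

lemma mzero_mem_jacobson_rad: "mzero \<in> jacobson_rad A"
proof -
  have "left_quasi_regular A u (mmul b mzero)" for b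
    unfolding left_quasi_regular_def
    using unit_mem unit_left[OF unit_mem] by (auto simp: fun_eq_iff mmul_def)
  then show ?thesis
    unfolding jacobson_rad_eq_quasi_regular_radical quasi_regular_radical_def
    using mzero_mem by blast
qed

lemma left_quasi_regular_commute:
  assumes "x \<in> A" and "y \<in> A" and "left_quasi_regular A u (mmul y x)"
  shows "left_quasi_regular A u (mmul x y)"
proof -
  obtain c where "c \<in> A" and c: "mmul c (mdiff u (mmul y x)) = u"
    using assms(3) unfolding left_quasi_regular_def by blast
  have unit_laws: "mmul u u = u" "mmul u (mmul x y) = mmul x y" "mmul u y = y" "mmul y u = y"
    using unit_mem assms(1,2) by (simp_all add: unit_left unit_right mmul_closed)
  \<comment> \<open>\<open>(u + x c y)(u - x y) = u - x y + x (c (u - y x)) y\<close>\<close>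
  have "mmul x (mmul (mmul c (mdiff u (mmul y x))) y) = mmul x y"
    using c unit_laws by simp
  then have "mmul (madd u (mmul x (mmul c y))) (mdiff u (mmul x y)) = u"
    by (simp add: mmul_simps unit_laws fun_eq_iff algebra_simps)
  moreover have "madd u (mmul x (mmul c y)) \<in> A"
    using unit_mem assms(1,2) \<open>c \<in> A\<close> by (intro madd_closed mmul_closed)
  ultimately show ?thesis
    unfolding left_quasi_regular_def by blast
qed

lemma semisimple_iff_jacobson_rad_trivial: "semisimple A \<longleftrightarrow> (\<forall>M\<in>jacobson_rad A. M = mzero)"
  unfolding semisimple_def using mzero_mem_jacobson_rad by blast

end

section \<open>Corner algebras\<close>

locale matrix_algebra_idempotent = matrix_algebra +
  fixes e :: "('x::finite, 'f::field) sqm"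
  assumes idem_mem: "e \<in> A" and idem: "mmul e e = e"
begin

lemma idem_mmul_idem: "mmul e (mmul e M) = mmul e M"
  using idem by (simp add: mmul_assoc[symmetric])

lemma unit_mmul_idem: "mmul u e = e" "mmul e u = e" "mmul u (mmul e M) = mmul e M"
  using idem_mem by (simp_all add: unit_left unit_right mmul_assoc[symmetric])

lemma compress_mem_corner: "M \<in> A \<Longrightarrow> mmul (mmul e M) e \<in> corner e A"
  unfolding corner_def by blast

lemma corner_subset: "corner e A \<subseteq> A"
  unfolding corner_def using idem_mem by (auto intro: mmul_closed)

sublocale corner: matrix_algebra "corner e A" e
proof
  show "e \<in> corner e A"
    using compress_mem_corner[OF unit_mem] by (simp add: unit_mmul_idem idem)
next
  fix M N assume "M \<in> corner e A" "N \<in> corner e A"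
  then obtain M0 N0 where "M0 \<in> A" "N0 \<in> A"
    and M: "M = mmul (mmul e M0) e" and N: "N = mmul (mmul e N0) e"
    unfolding corner_def by blast
  have "madd M N = mmul (mmul e (madd M0 N0)) e"
    unfolding M N by (simp add: mmul_simps)
  then show "madd M N \<in> corner e A"
    using compress_mem_corner madd_closed \<open>M0 \<in> A\<close> \<open>N0 \<in> A\<close> by simp
  have "mmul M N = mmul (mmul e (mmul M0 (mmul e N0))) e"
    unfolding M N by (simp add: mmul_simps idem idem_mmul_idem)
  then show "mmul M N \<in> corner e A"
    using compress_mem_corner mmul_closed idem_mem \<open>M0 \<in> A\<close> \<open>N0 \<in> A\<close> by simp
next
  fix M c assume "M \<in> corner e A"
  then obtain M0 where "M0 \<in> A" and M: "M = mmul (mmul e M0) e"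
    unfolding corner_def by blast
  have "msmult c M = mmul (mmul e (msmult c M0)) e"
    unfolding M by (simp add: mmul_simps)
  then show "msmult c M \<in> corner e A"
    using compress_mem_corner msmult_closed \<open>M0 \<in> A\<close> by simp
  show "mmul e M = M" "mmul M e = M"
    unfolding M by (simp_all add: mmul_simps idem idem_mmul_idem)
qed

lemma compress_mem_quasi_regular_radical:
  assumes "a \<in> quasi_regular_radical A u"
  shows "mmul (mmul e a) e \<in> quasi_regular_radical (corner e A) e"
proof -
  have "a \<in> A" and a_qr: "\<And>b. b \<in> A \<Longrightarrow> left_quasi_regular A u (mmul b a)"
    using assms unfolding quasi_regular_radical_def by auto
  have "left_quasi_regular (corner e A) e (mmul b' (mmul (mmul e a) e))"
    if "b' \<in> corner e A" for b'
  proof -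
    obtain b where "b \<in> A" and b': "b' = mmul (mmul e b) e"
      using \<open>b' \<in> corner e A\<close> unfolding corner_def by blast
    obtain c where "c \<in> A" and c: "mmul c (mdiff u (mmul b' a)) = u"
      using a_qr \<open>b' \<in> corner e A\<close> corner_subset
      unfolding left_quasi_regular_def by blast
    \<comment> \<open>compressing \<open>c (u - b' a) = u\<close> by \<open>e\<close> on both sides\<close>
    have "mmul (mmul (mmul e c) e) (mdiff e (mmul b' (mmul (mmul e a) e)))
        = mmul e (mmul (mmul c (mdiff u (mmul b' a))) e)"
      unfolding b' by (simp add: mmul_simps idem idem_mmul_idem unit_mmul_idem)
    also have "\<dots> = e"
      unfolding c by (simp add: unit_mmul_idem idem)
    finally show ?thesis
      unfolding left_quasi_regular_def using compress_mem_corner \<open>c \<in> A\<close> by blast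
  qed
  then show ?thesis
    unfolding quasi_regular_radical_def using compress_mem_corner \<open>a \<in> A\<close> by blast
qed

lemma quasi_regular_radical_corner_subset:
  "quasi_regular_radical (corner e A) e \<subseteq> quasi_regular_radical A u"
proof
  fix a' assume "a' \<in> quasi_regular_radical (corner e A) e"
  then have "a' \<in> corner e A"
    and a'_qr: "\<And>b'. b' \<in> corner e A \<Longrightarrow> left_quasi_regular (corner e A) e (mmul b' a')"
    unfolding quasi_regular_radical_def by auto
  then obtain a0 where a': "a' = mmul (mmul e a0) e"
    unfolding corner_def by blast
  have "a' \<in> A"
    using \<open>a' \<in> corner e A\<close> corner_subset by blast
  have "left_quasi_regular A u (mmul b a')" if "b \<in> A" for b
  proof -
    obtain c' where "c' \<in> corner e A" and c': "mmul c' (mdiff e (mmul (mmul (mmul e b) e) a')) = e"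
      using a'_qr[OF compress_mem_corner[OF \<open>b \<in> A\<close>]]
      unfolding left_quasi_regular_def by blast
    then obtain c0 where c0: "c' = mmul (mmul e c0) e"
      unfolding corner_def by blast
    \<comment> \<open>\<open>u - e\<close> kills the image of \<open>e\<close>, so it extends the left inverse \<open>c'\<close> from \<open>e A e\<close> to \<open>A\<close>\<close>
    have "mmul (madd c' (mdiff u e)) (mdiff u (mmul e (mmul b a'))) = u"
      using c' unfolding c0 a'
      by (simp add: mmul_simps idem idem_mmul_idem unit_mmul_idem unit_left[OF unit_mem]
          fun_eq_iff algebra_simps)
    moreover have "madd c' (mdiff u e) \<in> A"
      using \<open>c' \<in> corner e A\<close> corner_subset unit_mem idem_mem
      by (blast intro: madd_closed mdiff_closed)
    ultimately have "left_quasi_regular A u (mmul e (mmul b a'))"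
      unfolding left_quasi_regular_def by blast
    then have "left_quasi_regular A u (mmul (mmul b a') e)"
      using left_quasi_regular_commute \<open>a' \<in> A\<close> \<open>b \<in> A\<close> idem_mem mmul_closed by blast
    moreover have "mmul (mmul b a') e = mmul b a'"
      unfolding a' by (simp add: mmul_assoc idem)
    ultimately show ?thesis
      by simp
  qed
  then show "a' \<in> quasi_regular_radical A u"
    unfolding quasi_regular_radical_def using \<open>a' \<in> A\<close> by blast
qed

lemma jacobson_rad_corner_subset: "jacobson_rad (corner e A) \<subseteq> jacobson_rad A"
  using quasi_regular_radical_corner_subset
  by (simp add: jacobson_rad_eq_quasi_regular_radical corner.jacobson_rad_eq_quasi_regular_radical)

lemma compress_mem_jacobson_rad:
  "a \<in> jacobson_rad A \<Longrightarrow> mmul (mmul e a) e \<in> jacobson_rad (corner e A)"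
  using compress_mem_quasi_regular_radical
  by (simp add: jacobson_rad_eq_quasi_regular_radical corner.jacobson_rad_eq_quasi_regular_radical)

end

section \<open>Terwilliger algebras\<close>

lemma matrix_algebra_alg_gen: "matrix_algebra (alg_gen G) mone"
  by unfold_locales (auto intro: alg_gen.intros)

lemma Estar_diag: "Estar R y a = (\<lambda>u v. if u = v then (if (y, u) \<in> R a then 1 else 0) else 0)"
  by (auto simp: Estar_def fun_eq_iff)

lemma Estar_idem: "mmul (Estar R y a) (Estar R y a) = Estar R y a"
  unfolding Estar_diag mmul_diag_left by (auto simp: fun_eq_iff)

lemma Estar_block_apply:
  "(y, i) \<in> R a \<Longrightarrow> (y, j) \<in> R b \<Longrightarrow> mmul (mmul (Estar R y a) M) (Estar R y b) i j = M i j"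
  unfolding Estar_diag mmul_diag_left mmul_diag_right by simp

lemma eq_mzero_if_Estar_blocks_eq_mzero:
  assumes cover: "\<And>z. \<exists>a\<le>d. (y, z) \<in> R a"
    and blocks: "\<And>a b. a \<le> d \<Longrightarrow> b \<le> d \<Longrightarrow> mmul (mmul (Estar R y a) M) (Estar R y b) = mzero"
  shows "M = mzero"
proof (intro ext)
  fix i j
  obtain a b where "a \<le> d" "(y, i) \<in> R a" "b \<le> d" "(y, j) \<in> R b"
    using cover by blast
  then show "M i j = mzero i j"
    using Estar_block_apply[of y i R a j b M] blocks[of a b] by simp
qed

lemma is_scheme_cover:
  assumes "is_scheme d R"
  shows "\<exists>a\<le>d. (y, z) \<in> R a"
proof -
  have "(\<Union>a\<in>{..d}. R a) = UNIV"
    using assms unfolding is_scheme_def by (elim conjE) assumption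
  then show ?thesis
    by (metis UNIV_I UN_E atMost_iff)
qed

lemma matrix_algebra_idempotent_Estar:
  "c \<le> d \<Longrightarrow> matrix_algebra_idempotent (terwilliger d R y) mone (Estar R y c)"
  unfolding matrix_algebra_idempotent_def matrix_algebra_idempotent_axioms_def terwilliger_def
  by (auto intro: matrix_algebra_alg_gen alg_gen.gen Estar_idem)

theorem proposition5p11:
  fixes d :: nat and R :: "nat \<Rightarrow> ('x::finite \<times> 'x) set" and x :: 'x
  assumes "is_scheme d R"
    and "\<forall>M\<in>jacobson_rad (terwilliger d R x :: ('x, 'f::field) sqm set).
           \<forall>a\<le>d. \<forall>b\<le>d. a \<noteq> b \<longrightarrow> mmul (mmul (Estar R x a) M) (Estar R x b) = mzero"
  shows "semisimple (terwilliger d R x :: ('x, 'f) sqm set) \<longleftrightarrow>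
           (\<forall>c\<le>d. semisimple (corner (Estar R x c) (terwilliger d R x :: ('x, 'f) sqm set)))"
proof -
  let ?T = "terwilliger d R x :: ('x, 'f) sqm set"
  interpret T: matrix_algebra ?T mone
    unfolding terwilliger_def by (rule matrix_algebra_alg_gen)
  show ?thesis
  proof (intro iffI allI impI)
    fix c assume "semisimple ?T" and "c \<le> d"
    interpret E: matrix_algebra_idempotent ?T mone "Estar R x c"
      using \<open>c \<le> d\<close> by (rule matrix_algebra_idempotent_Estar)
    show "semisimple (corner (Estar R x c) ?T)"
      using E.jacobson_rad_corner_subset \<open>semisimple ?T\<close>
      unfolding E.corner.semisimple_iff_jacobson_rad_trivial T.semisimple_iff_jacobson_rad_trivial
      by blast
  next
    assume corners: "\<forall>c\<le>d. semisimple (corner (Estar R x c) ?T)"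
    have "M = mzero" if "M \<in> jacobson_rad ?T" for M
    proof (rule eq_mzero_if_Estar_blocks_eq_mzero[OF is_scheme_cover[OF assms(1)]])
      fix a b assume "a \<le> d" "b \<le> d"
      show "mmul (mmul (Estar R x a) M) (Estar R x b) = mzero"
      proof (cases "a = b")
        case True
        interpret E: matrix_algebra_idempotent ?T mone "Estar R x a"
          using \<open>a \<le> d\<close> by (rule matrix_algebra_idempotent_Estar)
        have "mmul (mmul (Estar R x a) M) (Estar R x a) \<in> jacobson_rad (corner (Estar R x a) ?T)"
          using E.compress_mem_jacobson_rad \<open>M \<in> jacobson_rad ?T\<close> .
        moreover have "semisimple (corner (Estar R x a) ?T)"
          using corners \<open>a \<le> d\<close> by simp
        ultimately show ?thesis
          unfolding True[symmetric] E.corner.semisimple_iff_jacobson_rad_trivial by blast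
      next
        case False
        then show ?thesis
          using assms(2) \<open>M \<in> jacobson_rad ?T\<close> \<open>a \<le> d\<close> \<open>b \<le> d\<close> by blast
      qed
    qed
    then show "semisimple ?T"
      using T.semisimple_iff_jacobson_rad_trivial by blast
  qed
qed

end
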